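(* Let $p$ be a prime number and let $x,y,z\in\mathbb{N}$ with $x\le y\le z$ satisfy $\frac{4}{p}=\frac{1}{x}+\frac{1}{y}+\frac{1}{z}$. Then $\gcd(y,p^2)\ne p^2$ and $\gcd(z,p^2)\ne p^2$.
   Context: $\mathbb{N}$ denotes the positive integers. *)

theory Defs
  imports Complex_Main "HOL-Computational_Algebra.Primes"
begin

end

theory Submission
  imports Defs
begin

text \<open>
  Clearing denominators gives \<open>4xyz = p(xy + yz + zx)\<close>, and comparing \<open>1/x\<close> with the sum forces
  \<open>p < 4x \<le> 3p\<close>, so \<open>p\<close> does not divide \<open>x\<close>. Reading the equation modulo \<open>p\<close> and then modulo
  \<open>p\<^sup>2\<close> shows that \<open>p\<^sup>2\<close> divides \<open>y\<close> iff it divides \<open>z\<close>. If both are multiples, \<open>y = p\<^sup>2Y\<close>,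
  \<open>z = p\<^sup>2Z\<close>, the equation becomes \<open>pYZ(4x - p) = x(Y + Z) < 2pZ\<close>, which forces \<open>Y = 1\<close>,
  \<open>4x = p + 1\<close> and finally \<open>3pZ = p + 1 + Z\<close>, impossible for \<open>p \<ge> 2\<close>.
\<close>

lemma egyptian_eq_nat:
  fixes n p x y z :: nat
  assumes "p > 0" "x > 0" "y > 0" "z > 0"
    and "real n / real p = 1 / real x + 1 / real y + 1 / real z"
  shows "n * x * y * z = p * (x * y + y * z + z * x)"
proof -
  have "real (n * x * y * z) = real (p * (x * y + y * z + z * x))"
    using assms by (simp add: field_simps)
  then show ?thesis by linarith
qed

lemma egyptian_smallest_bounds:
  fixes p x y z :: nat
  assumes "x > 0" "y > 0" "z > 0" "x \<le> y" "y \<le> z"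
    and eq: "4 * x * y * z = p * (x * y + y * z + z * x)"
  shows "4 * x \<le> 3 * p" "p < 4 * x"
proof -
  have "x * y \<le> y * z" "z * x \<le> y * z"
    using assms by (simp_all add: mult.commute[of x] mult_le_mono)
  then have "x * y + y * z + z * x \<le> 3 * (y * z)" by linarith
  then have "(4 * x) * (y * z) \<le> (3 * p) * (y * z)"
    using eq mult_le_mono2[of _ _ p] by (simp add: ac_simps)
  then show "4 * x \<le> 3 * p" using assms by simp
  have "p > 0" using eq assms by (cases "p = 0") auto
  have "p * (y * z) < p * (x * y + y * z + z * x)"
    using assms \<open>p > 0\<close> by simp
  then have "p * (y * z) < (4 * x) * (y * z)" using eq by (simp add: ac_simps)
  then show "p < 4 * x" by simp
qed

lemma prime_square_dvd_transfer:
  fixes n p x y z :: nat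
  assumes "prime p" "\<not> p dvd x"
    and eq: "n * x * y * z = p * (x * y + y * z + z * x)"
    and py: "p\<^sup>2 dvd y"
  shows "p\<^sup>2 dvd z"
proof -
  have cop: "coprime (p ^ k) x" for k
    using assms by (simp add: prime_imp_coprime)
  have zx_dvd: "p ^ k dvd z * x" if "p ^ k dvd y" "p ^ (k + 1) dvd y * z" for k
  proof -
    have "p * p ^ k dvd p * (x * y + y * z + z * x)"
      using that(2) eq by (metis dvd_mult mult.assoc mult.commute power_Suc Suc_eq_plus1)
    then have "p ^ k dvd x * y + y * z + z * x"
      using \<open>prime p\<close> by (simp add: prime_gt_0_nat)
    then show ?thesis
      using that(1) by (simp add: dvd_add_right_iff)
  qed
  have "p ^ 1 dvd y"
    using py dvd_trans le_imp_power_dvd by (metis one_le_numeral)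
  moreover have "p ^ (1 + 1) dvd y * z"
    using py by (simp only: one_add_one dvd_mult2)
  ultimately have "p ^ 1 dvd z * x" by (rule zx_dvd)
  then have "p dvd z"
    using cop[of 1] coprime_dvd_mult_left_iff by auto
  then have "p ^ (2 + 1) dvd y * z"
    using py by (metis mult_dvd_mono power_add power_one_right)
  with py have "p\<^sup>2 dvd z * x" by (rule zx_dvd)
  then show ?thesis
    using cop[of 2] coprime_dvd_mult_left_iff by blast
qed

lemma egyptian_quotient_eq:
  fixes p x Y Z :: nat
  assumes "p > 0"
    and "4 * x * (p\<^sup>2 * Y) * (p\<^sup>2 * Z)
           = p * (x * (p\<^sup>2 * Y) + (p\<^sup>2 * Y) * (p\<^sup>2 * Z) + (p\<^sup>2 * Z) * x)"
  shows "p * Y * Z * (4 * x) = p * Y * Z * p + x * (Y + Z)"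
proof -
  have "p ^ 3 * (p * Y * Z * (4 * x)) = p ^ 3 * (p * Y * Z * p + x * (Y + Z))"
    using assms(2) by (simp add: power2_eq_square power3_eq_cube algebra_simps)
  then show ?thesis using assms(1) by simp
qed

lemma egyptian_quotient_impossible:
  fixes p x Y Z :: nat
  assumes "p \<ge> 2" "x < p" "p < 4 * x" "Y > 0" "Y \<le> Z"
    and eq: "p * Y * Z * (4 * x) = p * Y * Z * p + x * (Y + Z)"
  shows False
proof -
  obtain d where d: "4 * x = p + d" "d \<ge> 1"
    using \<open>p < 4 * x\<close> by (metis less_imp_add_positive Suc_le_eq One_nat_def)
  have eq': "d * p * Y * Z = x * (Y + Z)" using eq d(1) by (simp add: algebra_simps)
  have "x * (Y + Z) < p * (2 * Z)"
    using assms by (intro mult_less_le_imp_less) auto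
  then have "(d * Y) * (p * Z) < 2 * (p * Z)" using eq' by (simp add: ac_simps)
  then have "d * Y < 2" by simp
  moreover have "d \<le> d * Y" "Y \<le> d * Y" using d(2) \<open>Y > 0\<close> by simp_all
  ultimately have "d = 1" "Y = 1" using d(2) \<open>Y > 0\<close> by linarith+
  then have "4 * (p * Z) = (p + 1) * (1 + Z)" using eq' d(1) by (metis mult.assoc mult_1)
  then have "3 * (p * Z) = p + 1 + Z" by (simp add: algebra_simps)
  moreover have "p * Z \<ge> p" "p * Z \<ge> 2 * Z" "Z \<ge> 1" using assms \<open>Y = 1\<close> by auto
  ultimately show False by linarith
qed

theorem lemma3:
  fixes p x y z :: nat
  assumes "prime p"
    and "x > 0" and "y > 0" and "z > 0"
    and "x \<le> y" and "y \<le> z"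
    and "(4::real) / real p = 1 / real x + 1 / real y + 1 / real z"
  shows "gcd y (p^2) \<noteq> p^2 \<and> gcd z (p^2) \<noteq> p^2"
proof (rule ccontr)
  assume "\<not> ?thesis"
  then have "p\<^sup>2 dvd y \<or> p\<^sup>2 dvd z" by (metis gcd_nat.absorb_iff2)
  have p2: "p \<ge> 2" using \<open>prime p\<close> prime_ge_2_nat by blast
  have eq: "4 * x * y * z = p * (x * y + y * z + z * x)"
    using egyptian_eq_nat[of p x y z 4] assms p2 by simp
  have "4 * x \<le> 3 * p" "p < 4 * x" using egyptian_smallest_bounds[OF _ _ _ _ _ eq] assms by auto
  then have "x < p" by linarith
  then have "\<not> p dvd x" using \<open>x > 0\<close> by (auto dest: dvd_imp_le)
  moreover have "4 * x * z * y = p * (x * z + z * y + y * x)"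
    using eq by (simp add: ac_simps)
  ultimately have "p\<^sup>2 dvd y" "p\<^sup>2 dvd z"
    using \<open>p\<^sup>2 dvd y \<or> p\<^sup>2 dvd z\<close> prime_square_dvd_transfer[OF \<open>prime p\<close>] eq by blast+
  then obtain Y Z where Y: "y = p\<^sup>2 * Y" and Z: "z = p\<^sup>2 * Z" by (auto simp: dvd_def)
  have "Y > 0" "Y \<le> Z" using Y Z assms p2 by auto
  moreover have "p * Y * Z * (4 * x) = p * Y * Z * p + x * (Y + Z)"
    using egyptian_quotient_eq eq p2 unfolding Y Z by simp
  ultimately show False using egyptian_quotient_impossible p2 \<open>x < p\<close> \<open>p < 4 * x\<close> by blast
qed

end
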